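(* Let $X_0, X_1, \dots, X_{T-1} \in \{0,1\}$ be any binary sequence, with burst density $\rho = T^{-1}\sum_t X_t$ and block-alternation rate $q = m/T$, where $m$ is the number of maximal runs of consecutive $1$'s. Let $\nu(w)$, $w \in \{0,1\}^2$, denote the empirical pair frequencies $\nu(w) = \frac{1}{T-1}\sum_{t=0}^{T-2} \mathbf{1}[X_t = w_0, X_{t+1} = w_1]$. Then \[ \nu(00) = 1-\rho-q+o(1),\quad \nu(01) = \nu(10) = q + o(1),\quad \nu(11) = \rho - q + o(1), \] where $o(1)$ denotes an error tending to $0$ as $T \to \infty$ uniformly over all such sequences. Consequently the depth-$3$ block total variation distance \[ \varepsilon_3 = \frac12 \sum_{w \in \{0,1\}^2} \bigl|\nu(w) - \rho^{s(w)}(1-\rho)^{2-s(w)}\bigr|, \qquad s(w) = w_0 + w_1, \] satisfies $\varepsilon_3 = 2|q - \rho(1-\rho)| + o(1)$.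
   Context: The sequence is thought of as decomposing into alternating blocks $1^{L_1}0^{G_1}1^{L_2}0^{G_2}\cdots 1^{L_m}0^{G_m}$, with $m$ burst runs (maximal runs of $1$'s) and $m$ gap runs (maximal runs of $0$'s). *)

theory Defs
  imports Complex_Main
begin

text \<open>A binary sequence X_0,...,X_{T-1} is a function X :: nat => nat with values in {0,1}
  on {..<T}; values beyond T-1 are irrelevant.\<close>

definition burst_density :: "nat \<Rightarrow> (nat \<Rightarrow> nat) \<Rightarrow> real" where
  "burst_density T X = (\<Sum>t<T. real (X t)) / real T"

definition num_runs :: "nat \<Rightarrow> (nat \<Rightarrow> nat) \<Rightarrow> nat" where
  "num_runs T X = card {t. t < T \<and> X t = 1 \<and> (t = 0 \<or> X (t - 1) = 0)}"

definition alt_rate :: "nat \<Rightarrow> (nat \<Rightarrow> nat) \<Rightarrow> real" where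
  "alt_rate T X = real (num_runs T X) / real T"

definition pair_freq :: "nat \<Rightarrow> (nat \<Rightarrow> nat) \<Rightarrow> nat \<Rightarrow> nat \<Rightarrow> real" where
  "pair_freq T X a b =
     (\<Sum>t<T - 1. if X t = a \<and> X (Suc t) = b then 1 else 0) / real (T - 1)"

definition eps3 :: "nat \<Rightarrow> (nat \<Rightarrow> nat) \<Rightarrow> real" where
  "eps3 T X = 1/2 * (\<Sum>(a, b) \<in> {0::nat, 1} \<times> {0::nat, 1}.
      \<bar>pair_freq T X a b - burst_density T X ^ (a + b) * (1 - burst_density T X) ^ (2 - (a + b))\<bar>)"

end

theory Submission
  imports Defs
begin

text \<open>Up to boundary terms, the pair counts of a binary word of length T are determined by its
  number S of ones and its number m of runs of ones: every run is entered through a pair 01 and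
  left through a pair 10, except possibly at the two ends of the word, and every one except
  possibly the last letter is followed by a one or a zero. So the counts of 01 and 10 are
  m + O(1), the count of 11 is exactly S - m, and the count of 00 is the rest of the T - 1 pairs;
  normalising by T - 1 instead of T costs only O(1/T). With d = q - \<rho>(1 - \<rho>), the product
  model values (1 - \<rho>)^2, \<rho>(1 - \<rho>), \<rho>(1 - \<rho>), \<rho>^2 exceed the limits
  1 - \<rho> - q, q, q, \<rho> - q by exactly d, -d, -d, d, so the total variation distance is
  2|d| up to the same error.\<close>


definition pair_count :: "(nat \<Rightarrow> nat) \<Rightarrow> nat \<Rightarrow> nat \<Rightarrow> nat \<Rightarrow> real" where
  "pair_count X a b n = (\<Sum>t<n. if X t = a \<and> X (Suc t) = b then 1 else 0)"

lemma pair_count_0 [simp]: "pair_count X a b 0 = 0"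
  by (simp add: pair_count_def)

lemma pair_count_Suc [simp]:
  "pair_count X a b (Suc n) = pair_count X a b n + (if X n = a \<and> X (Suc n) = b then 1 else 0)"
  by (simp add: pair_count_def)

lemma pair_freq_eq_pair_count: "pair_freq (Suc n) X a b = pair_count X a b n / real n"
  by (simp add: pair_freq_def pair_count_def)

lemma card_less_Suc_conj:
  "card {t. t < Suc n \<and> P t} = card {t. t < n \<and> P t} + (if P n then 1 else 0)"
proof -
  have "{t. t < Suc n \<and> P t} = {t. t < n \<and> P t} \<union> (if P n then {n} else {})"
    by (auto simp: less_Suc_eq)
  then show ?thesis
    by (auto simp: card_insert_if)
qed

lemma num_runs_1: "num_runs (Suc 0) X = (if X 0 = 1 then 1 else 0)"
  unfolding num_runs_def by (subst card_less_Suc_conj) auto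

lemma num_runs_Suc:
  "num_runs (Suc (Suc n)) X = num_runs (Suc n) X + (if X n = 0 \<and> X (Suc n) = 1 then 1 else 0)"
  unfolding num_runs_def by (subst card_less_Suc_conj) auto

lemma num_runs_le: "num_runs T X \<le> T"
proof -
  have "num_runs T X \<le> card {..<T}"
    unfolding num_runs_def by (rule card_mono) auto
  then show ?thesis
    by simp
qed

lemma pair_count_01_eq_num_runs:
  "pair_count X 0 1 n + (if X 0 = 1 then 1 else 0) = num_runs (Suc n) X"
  by (induction n) (auto simp: num_runs_1 num_runs_Suc)

lemma pair_count_10_eq_num_runs:
  assumes "\<forall>t\<le>n. X t \<in> {0, 1}"
  shows "pair_count X 1 0 n + (if X n = 1 then 1 else 0) = num_runs (Suc n) X"
  using assms
proof (induction n)
  case (Suc n)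
  have "pair_count X 1 0 n + (if X n = 1 then 1 else 0) = num_runs (Suc n) X"
    using Suc by simp
  moreover have "X n \<in> {0, 1}" "X (Suc n) \<in> {0, 1}"
    using Suc.prems by auto
  ultimately show ?case
    by (auto simp: num_runs_Suc)
qed (simp add: num_runs_1)

lemma sum_eq_pair_count_11_plus_10:
  assumes "\<forall>t\<le>n. X t \<in> {0, 1}"
  shows "pair_count X 1 1 n + pair_count X 1 0 n + (if X n = 1 then 1 else 0) = (\<Sum>t<Suc n. real (X t))"
  using assms by (induction n) auto

lemma pair_count_total:
  assumes "\<forall>t\<le>n. X t \<in> {0, 1}"
  shows "pair_count X 0 0 n + pair_count X 0 1 n + pair_count X 1 0 n + pair_count X 1 1 n = n"
  using assms
proof (induction n)
  case (Suc n)
  have "pair_count X 0 0 n + pair_count X 0 1 n + pair_count X 1 0 n + pair_count X 1 1 n = n"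
    using Suc by simp
  moreover have "X n \<in> {0, 1}" "X (Suc n) \<in> {0, 1}"
    using Suc.prems by auto
  ultimately show ?case
    by auto
qed simp

lemma count_ratio_approx:
  fixes c x k n :: real
  assumes "n > 0" and "\<bar>c - x\<bar> \<le> k" and "\<bar>x\<bar> \<le> n + 1"
  shows "\<bar>c / n - x / (n + 1)\<bar> \<le> (k + 1) / n"
proof -
  have "c / n - x / (n + 1) = (c - x) / n + x / (n * (n + 1))"
    using assms(1) by (simp add: divide_simps) (simp add: algebra_simps)
  then have "\<bar>c / n - x / (n + 1)\<bar> \<le> \<bar>(c - x) / n\<bar> + \<bar>x / (n * (n + 1))\<bar>"
    by (simp only: abs_triangle_ineq)
  also have "\<dots> \<le> k / n + 1 / n"
  proof (rule add_mono)
    show "\<bar>(c - x) / n\<bar> \<le> k / n"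
      using assms(1,2) by (simp add: divide_right_mono)
    show "\<bar>x / (n * (n + 1))\<bar> \<le> 1 / n"
      using assms(1,3) by (simp add: abs_mult divide_simps)
  qed
  finally show ?thesis
    by (simp add: add_divide_distrib)
qed

lemma total_variation_shift_approx:
  fixes p00 p01 p10 p11 u00 u01 u11 d k :: real
  assumes "\<bar>p00 - u00\<bar> \<le> k" "\<bar>p01 - u01\<bar> \<le> k" "\<bar>p10 - u01\<bar> \<le> k" "\<bar>p11 - u11\<bar> \<le> k"
  shows "\<bar>1/2 * (\<bar>p00 - (u00 + d)\<bar> + \<bar>p01 - (u01 - d)\<bar> + \<bar>p10 - (u01 - d)\<bar> + \<bar>p11 - (u11 + d)\<bar>)
      - 2 * \<bar>d\<bar>\<bar> \<le> 2 * k"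
proof -
  have shift_plus: "\<bar>\<bar>p - (u + s)\<bar> - \<bar>s\<bar>\<bar> \<le> k" if "\<bar>p - u\<bar> \<le> k" for p u s :: real
    using abs_triangle_ineq3[of "p - (u + s)" "- s"] that by simp
  have shift_minus: "\<bar>\<bar>p - (u - s)\<bar> - \<bar>s\<bar>\<bar> \<le> k" if "\<bar>p - u\<bar> \<le> k" for p u s :: real
    using abs_triangle_ineq3[of "p - (u - s)" s] that by simp
  show ?thesis
    using shift_plus[OF assms(1), of d] shift_minus[OF assms(2), of d] shift_minus[OF assms(3), of d]
      shift_plus[OF assms(4), of d]
    by argo
qed

lemma pair_freq_approx:
  assumes "n > 0" and binary: "\<forall>t\<le>n. X t \<in> {0, 1}"
  shows "\<bar>pair_freq (Suc n) X 0 0 - (1 - burst_density (Suc n) X - alt_rate (Suc n) X)\<bar> \<le> 2 / n"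
    and "\<bar>pair_freq (Suc n) X 0 1 - alt_rate (Suc n) X\<bar> \<le> 2 / n"
    and "\<bar>pair_freq (Suc n) X 1 0 - alt_rate (Suc n) X\<bar> \<le> 2 / n"
    and "\<bar>pair_freq (Suc n) X 1 1 - (burst_density (Suc n) X - alt_rate (Suc n) X)\<bar> \<le> 2 / n"
proof -
  define S where "S = (\<Sum>t<Suc n. real (X t))"
  define m where "m = real (num_runs (Suc n) X)"
  have "S \<le> (\<Sum>t<Suc n. 1)"
    unfolding S_def using binary by (intro sum_mono) (force simp: less_Suc_eq_le)
  then have S: "0 \<le> S" "S \<le> real n + 1"
    by (auto simp: S_def sum_nonneg)
  have m: "0 \<le> m" "m \<le> real n + 1"
    using num_runs_le[of "Suc n" X] by (auto simp: m_def)
  have density: "burst_density (Suc n) X = S / (real n + 1)"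
    by (simp add: burst_density_def S_def)
  have rate: "alt_rate (Suc n) X = m / (real n + 1)"
    by (simp add: alt_rate_def m_def)
  have c01: "\<bar>pair_count X 0 1 n - m\<bar> \<le> 1"
    using pair_count_01_eq_num_runs[of X n] by (auto simp: m_def split: if_splits)
  have c10: "\<bar>pair_count X 1 0 n - m\<bar> \<le> 1"
    using pair_count_10_eq_num_runs[OF binary] by (auto simp: m_def split: if_splits)
  have c11: "pair_count X 1 1 n = S - m"
    using sum_eq_pair_count_11_plus_10[OF binary] pair_count_10_eq_num_runs[OF binary]
    by (simp add: S_def m_def)
  have c00: "\<bar>pair_count X 0 0 n - (real n + 1 - S - m)\<bar> \<le> 1"
    using pair_count_total[OF binary] pair_count_01_eq_num_runs[of X n] c11
      pair_count_10_eq_num_runs[OF binary]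
    by (auto simp: m_def split: if_splits)
  have approx: "\<bar>pair_count X a b n / n - x / (real n + 1)\<bar> \<le> 2 / n"
    if "\<bar>pair_count X a b n - x\<bar> \<le> 1" "\<bar>x\<bar> \<le> real n + 1" for a b x
    by (rule order_trans[OF count_ratio_approx]) (use that \<open>n > 0\<close> in auto)
  have "1 - S / (real n + 1) - m / (real n + 1) = (real n + 1 - S - m) / (real n + 1)"
    by (simp add: diff_divide_distrib)
  then show "\<bar>pair_freq (Suc n) X 0 0 - (1 - burst_density (Suc n) X - alt_rate (Suc n) X)\<bar> \<le> 2 / n"
    using approx[OF c00] S m by (simp add: pair_freq_eq_pair_count density rate)
  show "\<bar>pair_freq (Suc n) X 0 1 - alt_rate (Suc n) X\<bar> \<le> 2 / n"
    using approx[OF c01] m by (simp add: pair_freq_eq_pair_count rate)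
  show "\<bar>pair_freq (Suc n) X 1 0 - alt_rate (Suc n) X\<bar> \<le> 2 / n"
    using approx[OF c10] m by (simp add: pair_freq_eq_pair_count rate)
  have "\<bar>pair_count X 1 1 n - (S - m)\<bar> \<le> 1" "\<bar>S - m\<bar> \<le> real n + 1"
    using c11 S m by auto
  from approx[OF this]
  show "\<bar>pair_freq (Suc n) X 1 1 - (burst_density (Suc n) X - alt_rate (Suc n) X)\<bar> \<le> 2 / n"
    by (simp add: pair_freq_eq_pair_count density rate diff_divide_distrib)
qed

lemma eps3_approx:
  assumes "n > 0" and binary: "\<forall>t\<le>n. X t \<in> {0, 1}"
  shows "\<bar>eps3 (Suc n) X - 2 * \<bar>alt_rate (Suc n) X - burst_density (Suc n) X * (1 - burst_density (Suc n) X)\<bar>\<bar>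
    \<le> 4 / n"
proof -
  define \<rho> where "\<rho> = burst_density (Suc n) X"
  define q where "q = alt_rate (Suc n) X"
  define d where "d = q - \<rho> * (1 - \<rho>)"
  have "(1 - \<rho>)\<^sup>2 = (1 - \<rho> - q) + d" "\<rho> * (1 - \<rho>) = q - d" "\<rho>\<^sup>2 = (\<rho> - q) + d"
    by (simp_all add: d_def power2_eq_square algebra_simps)
  then have "eps3 (Suc n) X = 1/2 * (\<bar>pair_freq (Suc n) X 0 0 - ((1 - \<rho> - q) + d)\<bar>
      + \<bar>pair_freq (Suc n) X 0 1 - (q - d)\<bar> + \<bar>pair_freq (Suc n) X 1 0 - (q - d)\<bar>
      + \<bar>pair_freq (Suc n) X 1 1 - ((\<rho> - q) + d)\<bar>)"
    by (simp add: eps3_def \<rho>_def[symmetric] power2_eq_square)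
  also have "\<bar>\<dots> - 2 * \<bar>d\<bar>\<bar> \<le> 2 * (2 / n)"
    by (rule total_variation_shift_approx) (use pair_freq_approx[OF assms] in \<open>simp_all add: \<rho>_def q_def\<close>)
  finally show ?thesis
    by (simp add: d_def \<rho>_def q_def)
qed

lemma pair_statistics_within:
  fixes e :: real
  assumes "1 < T" and "4 / real (T - 1) \<le> e" and binary: "\<forall>t<T. X t \<in> {0, 1}"
  shows "\<bar>pair_freq T X 0 0 - (1 - burst_density T X - alt_rate T X)\<bar> \<le> e \<and>
     \<bar>pair_freq T X 0 1 - alt_rate T X\<bar> \<le> e \<and>
     \<bar>pair_freq T X 1 0 - alt_rate T X\<bar> \<le> e \<and>
     \<bar>pair_freq T X 1 1 - (burst_density T X - alt_rate T X)\<bar> \<le> e \<and>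
     \<bar>eps3 T X - 2 * \<bar>alt_rate T X - burst_density T X * (1 - burst_density T X)\<bar>\<bar> \<le> e"
proof -
  obtain n where T: "T = Suc n" and "0 < n"
    using \<open>1 < T\<close> by (cases T) auto
  have binary_n: "\<forall>t\<le>n. X t \<in> {0, 1}"
    using binary T by auto
  have le4: "4 / real n \<le> e"
    using assms(2) T by simp
  have "2 / real n \<le> 4 / real n"
    by (simp add: divide_right_mono)
  with le4 have le2: "2 / real n \<le> e"
    by linarith
  note pair_freq = pair_freq_approx[OF \<open>0 < n\<close> binary_n]
  show ?thesis
    unfolding T
    using order_trans[OF pair_freq(1) le2] order_trans[OF pair_freq(2) le2]
      order_trans[OF pair_freq(3) le2] order_trans[OF pair_freq(4) le2]
      order_trans[OF eps3_approx[OF \<open>0 < n\<close> binary_n] le4]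
    by blast
qed

lemma ex_threshold_div_pred_le:
  fixes c e :: real
  assumes "e > 0"
  shows "\<exists>T0. \<forall>T\<ge>T0. 1 < T \<and> c / real (T - 1) \<le> e"
proof -
  obtain N :: nat where N: "c / e < N"
    using reals_Archimedean2 by blast
  have "1 < T \<and> c / real (T - 1) \<le> e" if "Suc (Suc N) \<le> T" for T
  proof -
    have "real N < real (T - 1)"
      using that by simp
    have "c < e * real N"
      using N \<open>e > 0\<close> by (simp add: pos_divide_less_eq mult.commute)
    also have "\<dots> < e * real (T - 1)"
      using \<open>real N < real (T - 1)\<close> \<open>e > 0\<close> by simp
    finally have "c < e * real (T - 1)" .
    moreover have "0 < real (T - 1)"
      using that by simp
    ultimately show ?thesis
      using that by (simp add: divide_le_eq mult.commute)
  qed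
  then show ?thesis
    by blast
qed

theorem proposition3p1:
  "\<forall>e>0. \<exists>T0::nat. \<forall>T\<ge>T0. \<forall>X::nat \<Rightarrow> nat. (\<forall>t<T. X t \<in> {0, 1}) \<longrightarrow>
     \<bar>pair_freq T X 0 0 - (1 - burst_density T X - alt_rate T X)\<bar> \<le> e \<and>
     \<bar>pair_freq T X 0 1 - alt_rate T X\<bar> \<le> e \<and>
     \<bar>pair_freq T X 1 0 - alt_rate T X\<bar> \<le> e \<and>
     \<bar>pair_freq T X 1 1 - (burst_density T X - alt_rate T X)\<bar> \<le> e \<and>
     \<bar>eps3 T X - 2 * \<bar>alt_rate T X - burst_density T X * (1 - burst_density T X)\<bar>\<bar> \<le> e"
  by (meson ex_threshold_div_pred_le pair_statistics_within)

end
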